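(* Let $A_1,\dots,A_{12}$ be the vertices of a regular icosahedron in $\mathbb R^3$ with centre $O$, and let $\Gamma$ be a sphere centred at $O$. For each $\lambda\in\{2,4,6\}$ the sum $\sum_{i=1}^{12}|MA_i|^{\lambda}$ does not depend on the position of $M\in\Gamma$.
   Context: $|MA|$ denotes Euclidean distance. *)

theory Defs
  imports "HOL-Analysis.Analysis"
begin

definition golden :: real where "golden = (1 + sqrt 5) / 2"

definition std_icosahedron :: "(real^3) set" where
  "std_icosahedron =
     (\<Union>s\<in>{-1,1::real}. \<Union>t\<in>{-1,1::real}.
        {vector [0, s, t * golden], vector [s, t * golden, 0], vector [t * golden, 0, s]})"

definition regular_icosahedron_vertices :: "(real^3) set \<Rightarrow> real^3 \<Rightarrow> bool" where
  "regular_icosahedron_vertices V Ctr \<longleftrightarrow>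
     (\<exists>Q c. orthogonal_transformation Q \<and> c > 0 \<and>
            V = (\<lambda>x. Ctr + c *\<^sub>R Q x) ` std_icosahedron)"

end

theory Submission
  imports Defs
begin

(* For a point set V on a sphere of radius \<rho> about the origin,
   |u - c v|^2 = |u|^2 + c^2 \<rho>^2 - 2c <u,v>, so by the binomial theorem
   \<Sum>v\<in>V |u - c v|^(2k) is a combination of the moments \<Sum>v\<in>V <u,v>^j, j \<le> k,
   with coefficients depending only on |u|.  Hence, if all moments of order
   \<le> t depend only on |u| (V is a spherical t-design), so do the power sums
   of order 2k \<le> 2t.  The vertices of the standard icosahedron have moments
   12, 0, 4(1 + golden^2)|u|^2, 0 for j = 0,1,2,3, so the claim holds for
   lam = 2, 4, 6.  Finally the sums over the given icosahedron
   Ctr + c Q(std_icosahedron) reduce to sums over std_icosahedron at the point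
   Q^-1 (M - Ctr), whose norm is r, because Q is an isometry. *)

text \<open>The moments of order \<le> t of a point set V: the power sums of <u,v> over V
  depend only on the norm of u (up to scaling, V is a spherical t-design).\<close>
definition moments_invariant :: "nat \<Rightarrow> 'a::real_inner set \<Rightarrow> bool" where
  "moments_invariant t V \<longleftrightarrow>
     (\<forall>j\<le>t. \<forall>u u'. norm u = norm u' \<longrightarrow>
        (\<Sum>v\<in>V. inner u v ^ j) = (\<Sum>v\<in>V. inner u' v ^ j))"

lemma power_sum_moment_expansion:
  fixes V :: "'a::real_inner set" and a b :: real
  shows "(\<Sum>v\<in>V. (b * inner u v + a) ^ k) =
         (\<Sum>j\<le>k. of_nat (k choose j) * b ^ j * a ^ (k - j) * (\<Sum>v\<in>V. inner u v ^ j))"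
proof -
  have binomial: "(b * inner u v + a) ^ k =
      (\<Sum>j\<le>k. of_nat (k choose j) * b ^ j * a ^ (k - j) * inner u v ^ j)" for v
    unfolding binomial_ring by (simp add: power_mult_distrib mult_ac)
  have "(\<Sum>v\<in>V. (b * inner u v + a) ^ k) =
        (\<Sum>v\<in>V. \<Sum>j\<le>k. of_nat (k choose j) * b ^ j * a ^ (k - j) * inner u v ^ j)"
    by (simp only: binomial)
  also have "\<dots> = (\<Sum>j\<le>k. of_nat (k choose j) * b ^ j * a ^ (k - j) * (\<Sum>v\<in>V. inner u v ^ j))"
    by (simp add: sum.swap[of _ V] sum_distrib_left)
  finally show ?thesis .
qed

lemma norm_diff_scaled_sq:
  fixes u v :: "'a::real_inner"
  assumes "norm v = \<rho>"
  shows "norm (u - c *\<^sub>R v) ^ 2 = (- 2 * c) * inner u v + (norm u ^ 2 + c ^ 2 * \<rho> ^ 2)"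
proof -
  have "inner v v = \<rho> ^ 2" using assms by (metis power2_norm_eq_inner)
  then show ?thesis
    unfolding power2_norm_eq_inner
    by (simp add: inner_diff inner_commute algebra_simps power2_eq_square)
qed

lemma power_sum_invariant:
  fixes V :: "'a::real_inner set"
  assumes design: "moments_invariant t V"
    and sphere: "\<forall>v\<in>V. norm v = \<rho>"
    and "k \<le> t" and same_norm: "norm u = norm u'"
  shows "(\<Sum>v\<in>V. norm (u - c *\<^sub>R v) ^ (2 * k)) = (\<Sum>v\<in>V. norm (u' - c *\<^sub>R v) ^ (2 * k))"
proof -
  have expand: "(\<Sum>v\<in>V. norm (w - c *\<^sub>R v) ^ (2 * k)) =
      (\<Sum>j\<le>k. of_nat (k choose j) * (- 2 * c) ^ j * (norm w ^ 2 + c ^ 2 * \<rho> ^ 2) ^ (k - j)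
               * (\<Sum>v\<in>V. inner w v ^ j))" for w
  proof -
    have "norm (w - c *\<^sub>R v) ^ (2 * k) =
          ((- 2 * c) * inner w v + (norm w ^ 2 + c ^ 2 * \<rho> ^ 2)) ^ k" if "v \<in> V" for v
    proof -
      have "norm v = \<rho>" using sphere that by blast
      then show ?thesis by (simp only: power_mult norm_diff_scaled_sq)
    qed
    then have "(\<Sum>v\<in>V. norm (w - c *\<^sub>R v) ^ (2 * k)) =
          (\<Sum>v\<in>V. ((- 2 * c) * inner w v + (norm w ^ 2 + c ^ 2 * \<rho> ^ 2)) ^ k)"
      by (rule sum.cong[OF refl])
    then show ?thesis by (simp only: power_sum_moment_expansion)
  qed
  have moments: "(\<Sum>v\<in>V. inner u v ^ j) = (\<Sum>v\<in>V. inner u' v ^ j)" if "j \<le> k" for j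
  proof -
    have "j \<le> t" using that \<open>k \<le> t\<close> by linarith
    then show ?thesis using design same_norm unfolding moments_invariant_def by blast
  qed
  show ?thesis
    unfolding expand same_norm by (intro sum.cong refl) (simp add: moments)
qed

definition std_icosahedron_list :: "(real^3) list" where
  "std_icosahedron_list =
     [vector [0, 1, golden], vector [0, 1, - golden], vector [0, - 1, golden],
      vector [0, - 1, - golden], vector [1, golden, 0], vector [1, - golden, 0],
      vector [- 1, golden, 0], vector [- 1, - golden, 0], vector [golden, 0, 1],
      vector [- golden, 0, 1], vector [golden, 0, - 1], vector [- golden, 0, - 1]]"

text \<open>Needed to see that the twelve listed vertices are pairwise distinct.\<close>
lemma golden_gt_1: "golden > 1"
  unfolding golden_def by simp

lemma vector3_eq_iff:
  "(vector [a, b, c] :: real^3) = vector [a', b', c'] \<longleftrightarrow> a = a' \<and> b = b' \<and> c = c'"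
  by (auto simp: vec_eq_iff forall_3)

text \<open>The list enumerates std_icosahedron without repetitions (as golden \<noteq> \<plusminus>1, 0),
  so sums over the vertex set are sums over the list.\<close>
lemma sum_std_icosahedron:
  "(\<Sum>v\<in>std_icosahedron. f v) = (\<Sum>v\<leftarrow>std_icosahedron_list. f v)"
proof -
  have "std_icosahedron = set std_icosahedron_list"
    unfolding std_icosahedron_def std_icosahedron_list_def by auto
  moreover have "distinct std_icosahedron_list"
    using golden_gt_1 unfolding std_icosahedron_list_def by (auto simp: vector3_eq_iff)
  ultimately show ?thesis
    using sum.distinct_set_conv_list by metis
qed

lemma inner_vector3: "inner u (vector [x, y, z] :: real^3) = u$1 * x + u$2 * y + u$3 * z"
  by (simp add: inner_vec_def sum_3)

lemma norm3_sq: "norm (u :: real^3) ^ 2 = (u$1)^2 + (u$2)^2 + (u$3)^2"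
  unfolding power2_norm_eq_inner by (simp add: inner_vec_def sum_3 power2_eq_square)

text \<open>The moments of order 0 to 3 of the standard icosahedron: the odd ones vanish
  by central symmetry, the second one is isotropic.\<close>
lemma std_icosahedron_moments:
  fixes u :: "real^3"
  shows "(\<Sum>v\<in>std_icosahedron. inner u v ^ 0) = 12"
    and "(\<Sum>v\<in>std_icosahedron. inner u v ^ 1) = 0"
    and "(\<Sum>v\<in>std_icosahedron. inner u v ^ 2) = 4 * (1 + golden ^ 2) * norm u ^ 2"
    and "(\<Sum>v\<in>std_icosahedron. inner u v ^ 3) = 0"
  unfolding sum_std_icosahedron std_icosahedron_list_def norm3_sq
  by (simp_all add: inner_vector3 power2_eq_square power3_eq_cube algebra_simps)

lemma std_icosahedron_moments_invariant: "moments_invariant 3 std_icosahedron"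
  unfolding moments_invariant_def
proof (intro allI impI)
  fix j :: nat and u u' :: "real^3"
  assume "j \<le> 3" and same_norm: "norm u = norm u'"
  then consider "j = 0" | "j = 1" | "j = 2" | "j = 3" by linarith
  then show "(\<Sum>v\<in>std_icosahedron. inner u v ^ j) = (\<Sum>v\<in>std_icosahedron. inner u' v ^ j)"
    by cases (simp_all only: std_icosahedron_moments same_norm)
qed

lemma std_icosahedron_on_sphere:
  "\<forall>v\<in>std_icosahedron. norm v = sqrt (1 + golden ^ 2)"
  unfolding std_icosahedron_def
  by (auto simp: norm_eq_sqrt_inner inner_vector3 power2_eq_square algebra_simps)

lemma dist_similarity_image:
  assumes Q: "orthogonal_transformation Q" and u: "Q u = N - Ctr"
  shows "dist N (Ctr + c *\<^sub>R Q v) = norm (u - c *\<^sub>R v)"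
proof -
  have "N - (Ctr + c *\<^sub>R Q v) = Q (u - c *\<^sub>R v)"
    using u orthogonal_transformation_linear[OF Q]
    by (simp add: linear_diff linear_scale algebra_simps)
  then show ?thesis
    by (simp add: dist_norm orthogonal_transformation_norm[OF Q])
qed

lemma sum_dist_similarity_image:
  fixes S :: "'a::real_inner set"
  assumes Q: "orthogonal_transformation Q" and "c \<noteq> 0" and u: "Q u = N - Ctr"
  shows "(\<Sum>p\<in>(\<lambda>x. Ctr + c *\<^sub>R Q x) ` S. f (dist N p)) = (\<Sum>v\<in>S. f (norm (u - c *\<^sub>R v)))"
proof -
  have "inj (\<lambda>x. Ctr + c *\<^sub>R Q x)"
    using orthogonal_transformation_inj[OF Q] \<open>c \<noteq> 0\<close> by (auto simp: inj_def)
  then show ?thesis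
    by (simp add: sum.reindex inj_on_subset dist_similarity_image[OF Q u])
qed

theorem proposition5p1:
  fixes A :: "nat \<Rightarrow> real^3" and Ctr :: "real^3" and r :: real and lam :: nat
  assumes "inj_on A {1..12}"
    and "regular_icosahedron_vertices (A ` {1..12}) Ctr"
    and "lam \<in> {2, 4, 6}"
  shows "\<forall>M M'. dist M Ctr = r \<longrightarrow> dist M' Ctr = r \<longrightarrow>
           (\<Sum>i=1..12. dist M (A i) ^ lam) = (\<Sum>i=1..12. dist M' (A i) ^ lam)"
proof (intro allI impI)
  fix M M' assume M: "dist M Ctr = r" and M': "dist M' Ctr = r"
  obtain Q c where Q: "orthogonal_transformation Q" and "c > 0"
    and V: "A ` {1..12} = (\<lambda>x. Ctr + c *\<^sub>R Q x) ` std_icosahedron"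
    using assms(2) unfolding regular_icosahedron_vertices_def by blast
  obtain k where k: "k \<le> 3" "lam = 2 * k" using assms(3) by auto
  obtain u u' where u: "Q u = M - Ctr" and u': "Q u' = M' - Ctr"
    using orthogonal_transformation_surj[OF Q] by (metis surjD)
  have reduce: "(\<Sum>i=1..12. dist N (A i) ^ lam) = (\<Sum>v\<in>std_icosahedron. norm (w - c *\<^sub>R v) ^ lam)"
    if "Q w = N - Ctr" for N w
  proof -
    have "(\<Sum>i=1..12. dist N (A i) ^ lam) = (\<Sum>p\<in>A ` {1..12}. dist N p ^ lam)"
      using sum.reindex[OF assms(1), of "\<lambda>p. dist N p ^ lam"] by simp
    also have "\<dots> = (\<Sum>v\<in>std_icosahedron. norm (w - c *\<^sub>R v) ^ lam)"
      unfolding V using \<open>c > 0\<close>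
      by (intro sum_dist_similarity_image[OF Q _ that, where f = "\<lambda>d. d ^ lam"]) simp
    finally show ?thesis .
  qed
  have "norm u = norm u'"
    using M M' u u' orthogonal_transformation_norm[OF Q] by (metis dist_norm)
  then show "(\<Sum>i=1..12. dist M (A i) ^ lam) = (\<Sum>i=1..12. dist M' (A i) ^ lam)"
    unfolding reduce[OF u] reduce[OF u'] unfolding k(2)
    by (rule power_sum_invariant[OF std_icosahedron_moments_invariant
                                   std_icosahedron_on_sphere k(1)])
qed

end
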